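(* Let $G$ be an additive subgroup of $\mathbb{C}$ with $\mathrm{rank}\,G\ge 2$, and let $V$ be a nontrivial irreducible Harish-Chandra module over $\mathrm{Vir}[G]$. For any finite subset $I$ of $\mathrm{supp}V$ there is a subgroup $G_I$ of $G$ such that: (a) $G_I\cong\mathbb{Z}^k$ for some $k\in\mathbb{N}$; (b) $U(G_I)V_\mu=U(G_I)V_{\mu'}$ and $\mu-\mu'\in G_I$ for all $\mu,\mu'\in I$; (c) $V_\mu$ is an irreducible $U(G_I)_0$-module for every $\mu\in I$.
   Context: $\mathbb{N}$ denotes the positive integers. For a nonzero additive subgroup $G$ of $\mathbb{C}$, $\mathrm{Vir}[G]$ is the complex Lie algebra with basis $\{C,d_x:x\in G\}$ and brackets $[d_x,d_y]=(y-x)d_{x+y}+\delta_{x,-y}\frac{x^3-x}{12}C$, $[C,d_x]=0$; for a subgroup $H\subseteq G$, $\mathrm{Vir}[H]$ is the subalgebra spanned by $C$ and $d_x$, $x\in H$. $U(H)$ denotes the universal enveloping algebra of $\mathrm{Vir}[H]$, and for $a\in\mathbb{C}$, $U(H)_a=\{y\in U(H):[d_0,y]=ay\}$. The rank of a subgroup $A$ of $\mathbb{C}$ is the maximal $r$ such that there exist nonzero $g_1,\dots,g_r\in A$ with $\mathbb{Z}g_1+\dots+\mathbb{Z}g_r$ a direct sum ($\infty$ if no maximum exists). For a module $V$ on which $C$ acts as a scalar, $V_\lambda=\{v:d_0v=\lambda v\}$; $V$ is a weight module if it is the sum of its weight spaces, and Harish-Chandra if moreover all weight spaces are finite-dimensional;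 $\mathrm{supp}V=\{\lambda:V_\lambda\ne0\}$. $V$ is trivial if $\mathrm{Vir}[G]V=0$. *)

theory Defs
  imports Main "HOL.Complex"
begin

definition add_subgroup :: "complex set \<Rightarrow> bool" where
  "add_subgroup G \<longleftrightarrow> 0 \<in> G \<and> (\<forall>x\<in>G. \<forall>y\<in>G. x + y \<in> G) \<and> (\<forall>x\<in>G. - x \<in> G)"

definition rank_ge :: "complex set \<Rightarrow> nat \<Rightarrow> bool" where
  "rank_ge A r \<longleftrightarrow> (\<exists>g :: nat \<Rightarrow> complex. (\<forall>i<r. g i \<in> A \<and> g i \<noteq> 0) \<and>
     (\<forall>n :: nat \<Rightarrow> int. (\<Sum>i<r. of_int (n i) * g i) = 0 \<longrightarrow> (\<forall>i<r. of_int (n i) * g i = 0)))"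

definition iso_Zk :: "complex set \<Rightarrow> nat \<Rightarrow> bool" where
  "iso_Zk H k \<longleftrightarrow> (\<exists>g :: nat \<Rightarrow> complex.
     (\<forall>n :: nat \<Rightarrow> int. (\<Sum>i<k. of_int (n i) * g i) = 0 \<longrightarrow> (\<forall>i<k. n i = 0)) \<and>
     H = range (\<lambda>n :: nat \<Rightarrow> int. \<Sum>i<k. of_int (n i) * g i))"

text \<open>A Vir[G]-module on which C acts as the scalar c: a complex vector space (scalar
  multiplication scale), with linear operators d x (x in G) satisfying the Virasoro relations.\<close>
definition vir_module ::
  "complex set \<Rightarrow> (complex \<Rightarrow> 'v::ab_group_add \<Rightarrow> 'v) \<Rightarrow> (complex \<Rightarrow> 'v \<Rightarrow> 'v) \<Rightarrow> complex \<Rightarrow> bool" where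
  "vir_module G scale d c \<longleftrightarrow> vector_space scale \<and>
     (\<forall>x\<in>G. Vector_Spaces.linear scale scale (d x)) \<and>
     (\<forall>x\<in>G. \<forall>y\<in>G. \<forall>v. d x (d y v) - d y (d x v) =
        scale (y - x) (d (x + y) v) + (if x = - y then scale ((x ^ 3 - x) / 12 * c) v else 0))"

definition weight_space :: "(complex \<Rightarrow> 'v \<Rightarrow> 'v) \<Rightarrow> (complex \<Rightarrow> 'v \<Rightarrow> 'v) \<Rightarrow> complex \<Rightarrow> 'v set" where
  "weight_space scale d lam = {v. d 0 v = scale lam v}"

definition supp :: "(complex \<Rightarrow> 'v::zero \<Rightarrow> 'v) \<Rightarrow> (complex \<Rightarrow> 'v \<Rightarrow> 'v) \<Rightarrow> complex set" where
  "supp scale d = {lam. weight_space scale d lam \<noteq> {0}}"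

definition weight_module :: "(complex \<Rightarrow> 'v::ab_group_add \<Rightarrow> 'v) \<Rightarrow> (complex \<Rightarrow> 'v \<Rightarrow> 'v) \<Rightarrow> bool" where
  "weight_module scale d \<longleftrightarrow> (\<forall>v. v \<in> module.span scale (\<Union>lam. weight_space scale d lam))"

definition harish_chandra :: "(complex \<Rightarrow> 'v::ab_group_add \<Rightarrow> 'v) \<Rightarrow> (complex \<Rightarrow> 'v \<Rightarrow> 'v) \<Rightarrow> bool" where
  "harish_chandra scale d \<longleftrightarrow> weight_module scale d \<and>
     (\<forall>lam. \<exists>B. finite B \<and> B \<subseteq> weight_space scale d lam \<and> module.span scale B = weight_space scale d lam)"

text \<open>Irreducible: the only Vir[G]-submodules are 0 and V (C acts as a scalar, so
  submodules are exactly the subspaces stable under all d_x).\<close>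
definition vir_irreducible :: "complex set \<Rightarrow> (complex \<Rightarrow> 'v::ab_group_add \<Rightarrow> 'v) \<Rightarrow> (complex \<Rightarrow> 'v \<Rightarrow> 'v) \<Rightarrow> bool" where
  "vir_irreducible G scale d \<longleftrightarrow> (\<forall>W. module.subspace scale W \<longrightarrow> (\<forall>x\<in>G. \<forall>w\<in>W. d x w \<in> W) \<longrightarrow>
       W = {0} \<or> W = UNIV)"

definition vir_trivial :: "complex set \<Rightarrow> (complex \<Rightarrow> 'v::ab_group_add \<Rightarrow> 'v) \<Rightarrow> (complex \<Rightarrow> 'v \<Rightarrow> 'v) \<Rightarrow> complex \<Rightarrow> bool" where
  "vir_trivial G scale d c \<longleftrightarrow> (\<forall>x\<in>G. \<forall>v. d x v = 0) \<and> (\<forall>v. scale c v = 0)"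

definition word_op :: "(complex \<Rightarrow> 'v \<Rightarrow> 'v) \<Rightarrow> complex list \<Rightarrow> 'v \<Rightarrow> 'v" where
  "word_op d xs v = foldr d xs v"

text \<open>U(H) V_mu: the image of U(H) (spanned by monomials in the d_x, x in H; C acts as a scalar)
  applied to V_mu.\<close>
definition U_apply :: "(complex \<Rightarrow> 'v::ab_group_add \<Rightarrow> 'v) \<Rightarrow> (complex \<Rightarrow> 'v \<Rightarrow> 'v) \<Rightarrow> complex set \<Rightarrow> complex \<Rightarrow> 'v set" where
  "U_apply scale d H \<mu> = module.span scale
     {word_op d xs v | xs v. set xs \<subseteq> H \<and> v \<in> weight_space scale d \<mu>}"

text \<open>U(H)_0 is spanned by the monomials
  d_{x_1}...d_{x_n} (times powers of C, a scalar) with x_1+...+x_n = 0, so a subspace of V_mu is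
  a U(H)_0-submodule iff it is stable under these monomials.\<close>
definition U0_irreducible :: "(complex \<Rightarrow> 'v::ab_group_add \<Rightarrow> 'v) \<Rightarrow> (complex \<Rightarrow> 'v \<Rightarrow> 'v) \<Rightarrow> complex set \<Rightarrow> complex \<Rightarrow> bool" where
  "U0_irreducible scale d H \<mu> \<longleftrightarrow> weight_space scale d \<mu> \<noteq> {0} \<and>
     (\<forall>W. module.subspace scale W \<longrightarrow> W \<subseteq> weight_space scale d \<mu> \<longrightarrow>
        (\<forall>xs. set xs \<subseteq> H \<longrightarrow> sum_list xs = 0 \<longrightarrow> (\<forall>w\<in>W. word_op d xs w \<in> W)) \<longrightarrow>
        W = {0} \<or> W = weight_space scale d \<mu>)"

end

theory Submission
  imports Defs "HOL-Library.Function_Algebras"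
begin

text \<open>
  By irreducibility, every nonzero vector generates the module under the monomials
  \<open>d\<^sub>x\<^sub>1 \<cdots> d\<^sub>x\<^sub>n\<close> (\<open>x\<^sub>i \<in> G\<close>). Sorting by weight, all weights lie in one coset of \<open>G\<close>, and
  \<open>V\<^sub>\<mu>\<close> is spanned by the monomials of degree \<open>0\<close> applied to any nonzero \<open>w \<in> V\<^sub>\<mu>\<close>. As \<open>V\<^sub>\<mu>\<close> is
  finite-dimensional, these monomials act on it through a finite-dimensional space of operators,
  so finitely many of them already suffice; similarly a basis of \<open>V\<^sub>\<mu>'\<close> is reached from \<open>V\<^sub>\<mu>\<close> by
  finitely many monomials. Hence (b) and (c) hold for every subgroup \<open>H \<subseteq> G\<close> containing a
  suitable finite set of letters. Such a set lies in a lattice \<open>\<Lambda> \<cong> \<int>\<^sup>k\<close> of \<open>\<complex>\<close>, and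
  \<open>G\<^sub>I = G \<inter> \<Lambda>\<close> is free as a subgroup of \<open>\<Lambda>\<close>.
\<close>

section \<open>Free subgroups of the complex numbers\<close>

definition int_span :: "(nat \<Rightarrow> complex) \<Rightarrow> nat \<Rightarrow> complex set" where
  "int_span e k = range (\<lambda>n::nat \<Rightarrow> int. \<Sum>i<k. of_int (n i) * e i)"

definition int_independent :: "(nat \<Rightarrow> complex) \<Rightarrow> nat \<Rightarrow> bool" where
  "int_independent e k \<longleftrightarrow>
     (\<forall>n::nat \<Rightarrow> int. (\<Sum>i<k. of_int (n i) * e i) = 0 \<longrightarrow> (\<forall>i<k. n i = 0))"

lemma iso_Zk_iff: "iso_Zk H k \<longleftrightarrow> (\<exists>e. int_independent e k \<and> H = int_span e k)"
  unfolding iso_Zk_def int_independent_def int_span_def by blast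

lemma add_subgroup_zero: "add_subgroup H \<Longrightarrow> 0 \<in> H"
  and add_subgroup_add: "add_subgroup H \<Longrightarrow> x \<in> H \<Longrightarrow> y \<in> H \<Longrightarrow> x + y \<in> H"
  and add_subgroup_uminus: "add_subgroup H \<Longrightarrow> x \<in> H \<Longrightarrow> - x \<in> H"
  unfolding add_subgroup_def by blast+

lemma add_subgroup_diff: "add_subgroup H \<Longrightarrow> x \<in> H \<Longrightarrow> y \<in> H \<Longrightarrow> x - y \<in> H"
  unfolding add_subgroup_def by (metis diff_conv_add_uminus)

lemma add_subgroup_Int: "add_subgroup A \<Longrightarrow> add_subgroup B \<Longrightarrow> add_subgroup (A \<inter> B)"
  unfolding add_subgroup_def by blast

lemma add_subgroup_sum_list: "add_subgroup H \<Longrightarrow> set xs \<subseteq> H \<Longrightarrow> sum_list xs \<in> H"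
  by (induction xs) (auto simp: add_subgroup_zero add_subgroup_add)

lemma add_subgroup_int_mult:
  assumes "add_subgroup H" "x \<in> H"
  shows "of_int m * x \<in> H"
proof -
  have nat_mult: "of_nat n * x \<in> H" for n
    using assms by (induction n) (auto simp: add_subgroup_def distrib_right)
  show ?thesis
  proof (cases "m \<ge> 0")
    case True
    then show ?thesis using nat_mult[of "nat m"] by simp
  next
    case False
    then have "of_int m * x = - (of_nat (nat (- m)) * x)" by simp
    then show ?thesis using nat_mult[of "nat (- m)"] add_subgroup_uminus[OF assms(1)] by simp
  qed
qed

lemma int_span_cong: "(\<And>i. i < k \<Longrightarrow> e i = e' i) \<Longrightarrow> int_span e k = int_span e' k"
  unfolding int_span_def by (intro image_cong refl sum.cong) auto

lemma int_independent_cong: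
  "(\<And>i. i < k \<Longrightarrow> e i = e' i) \<Longrightarrow> int_independent e k = int_independent e' k"
proof -
  assume "\<And>i. i < k \<Longrightarrow> e i = e' i"
  then have "(\<Sum>i<k. of_int (n i) * e i) = (\<Sum>i<k. of_int (n i) * e' i)" for n :: "nat \<Rightarrow> int"
    by (intro sum.cong) auto
  then show ?thesis unfolding int_independent_def by simp
qed

lemma int_span_0 [simp]: "int_span e 0 = {0}"
  unfolding int_span_def by auto

lemma int_combination_fun_upd:
  "(\<Sum>i<Suc k. of_int ((n(k := m)) i) * e i) = (\<Sum>i<k. of_int (n i) * e i) + of_int m * e k"
  by (simp add: sum.lessThan_Suc)

lemma int_span_Suc: "int_span e (Suc k) = {y + of_int m * e k | y m. y \<in> int_span e k}"
proof safe
  fix x assume "x \<in> int_span e (Suc k)"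
  then obtain n where "x = (\<Sum>i<Suc k. of_int (n i) * e i)" unfolding int_span_def by blast
  then have "x = (\<Sum>i<k. of_int (n i) * e i) + of_int (n k) * e k" by simp
  then show "\<exists>y m. x = y + of_int m * e k \<and> y \<in> int_span e k" unfolding int_span_def by blast
next
  fix y m assume "y \<in> int_span e k"
  then obtain n where "y = (\<Sum>i<k. of_int (n i) * e i)" unfolding int_span_def by blast
  then have "y + of_int m * e k = (\<Sum>i<Suc k. of_int ((n(k := m)) i) * e i)"
    by (simp only: int_combination_fun_upd)
  then show "y + of_int m * e k \<in> int_span e (Suc k)"
    unfolding int_span_def by (rule range_eqI[where x = "n(k := m)"])
qed

lemma int_independent_Suc:
  "int_independent e (Suc k) \<longleftrightarrow>
     int_independent e k \<and> (\<forall>y\<in>int_span e k. \<forall>m. y + of_int m * e k = 0 \<longrightarrow> m = 0)"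
proof safe
  assume indep: "int_independent e (Suc k)"
  show "int_independent e k" unfolding int_independent_def
  proof (intro allI impI)
    fix n :: "nat \<Rightarrow> int" and i assume sum0: "(\<Sum>i<k. of_int (n i) * e i) = 0" and "i < k"
    have "(\<Sum>i<Suc k. of_int ((n(k := 0)) i) * e i) = 0"
      using sum0 by (simp only: int_combination_fun_upd) simp
    then have "\<forall>i<Suc k. (n(k := 0)) i = 0" using indep unfolding int_independent_def by blast
    then have "(n(k := 0)) i = 0" using \<open>i < k\<close> less_SucI by blast
    then show "n i = 0" using \<open>i < k\<close> by simp
  qed
  fix y m assume "y \<in> int_span e k" "y + of_int m * e k = 0"
  then obtain n where "(\<Sum>i<Suc k. of_int ((n(k := m)) i) * e i) = 0"
    unfolding int_span_def int_combination_fun_upd by blast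
  then have "(n(k := m)) k = 0" using indep unfolding int_independent_def by blast
  then show "m = 0" by simp
next
  assume indep: "int_independent e k"
    and last: "\<forall>y\<in>int_span e k. \<forall>m. y + of_int m * e k = 0 \<longrightarrow> m = 0"
  show "int_independent e (Suc k)" unfolding int_independent_def
  proof (intro allI impI)
    fix n :: "nat \<Rightarrow> int" and i assume sum0: "(\<Sum>i<Suc k. of_int (n i) * e i) = 0" "i < Suc k"
    then have "n k = 0" using last unfolding int_span_def by simp
    then have "\<forall>i<k. n i = 0" using sum0 indep unfolding int_independent_def by simp
    then show "n i = 0" using \<open>n k = 0\<close> \<open>i < Suc k\<close> less_Suc_eq by blast
  qed
qed

lemma add_subgroup_int_span: "add_subgroup (int_span e k)"
  unfolding add_subgroup_def int_span_def
proof (intro conjI ballI)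
  show "0 \<in> range (\<lambda>n::nat \<Rightarrow> int. \<Sum>i<k. of_int (n i) * e i)"
    by (rule image_eqI[of _ _ "\<lambda>_. 0"]) auto
next
  fix x y assume "x \<in> range (\<lambda>n::nat \<Rightarrow> int. \<Sum>i<k. of_int (n i) * e i)"
    "y \<in> range (\<lambda>n::nat \<Rightarrow> int. \<Sum>i<k. of_int (n i) * e i)"
  then obtain n n' where "x = (\<Sum>i<k. of_int (n i) * e i)" "y = (\<Sum>i<k. of_int (n' i) * e i)"
    by blast
  then show "x + y \<in> range (\<lambda>n::nat \<Rightarrow> int. \<Sum>i<k. of_int (n i) * e i)"
    by (intro image_eqI[of _ _ "\<lambda>i. n i + n' i"]) (auto simp: sum.distrib distrib_right)
next
  fix x assume "x \<in> range (\<lambda>n::nat \<Rightarrow> int. \<Sum>i<k. of_int (n i) * e i)"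
  then obtain n where "x = (\<Sum>i<k. of_int (n i) * e i)" by blast
  then show "- x \<in> range (\<lambda>n::nat \<Rightarrow> int. \<Sum>i<k. of_int (n i) * e i)"
    by (intro image_eqI[of _ _ "\<lambda>i. - n i"]) (auto simp: sum_negf)
qed

lemma int_span_mult: "int_span (\<lambda>i. c * e i) k = (\<lambda>x. c * x) ` int_span e k"
  unfolding int_span_def image_image by (simp add: sum_distrib_left mult.left_commute)

lemma int_independent_mult:
  "c \<noteq> 0 \<Longrightarrow> int_independent (\<lambda>i. c * e i) k \<longleftrightarrow> int_independent e k"
  unfolding int_independent_def by (simp add: sum_distrib_left[symmetric] mult.left_commute)

lemma int_diff_closed_generator:
  fixes D :: "int set"
  assumes diff: "\<And>a b. a \<in> D \<Longrightarrow> b \<in> D \<Longrightarrow> a - b \<in> D" and "a \<in> D" "a \<noteq> 0"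
  shows "\<exists>p>0. p \<in> D \<and> (\<forall>m\<in>D. p dvd m)"
proof -
  have "0 \<in> D" using diff \<open>a \<in> D\<close> by fastforce
  then have "\<bar>a\<bar> \<in> D" using diff \<open>a \<in> D\<close> by (cases "a \<ge> 0") fastforce+
  obtain p where p: "0 < p" "p \<in> D" and p_least: "\<And>q. 0 < q \<Longrightarrow> q \<in> D \<Longrightarrow> p \<le> q"
  proof
    define n where "n = (LEAST n::nat. 0 < n \<and> int n \<in> D)"
    have "0 < nat \<bar>a\<bar> \<and> int (nat \<bar>a\<bar>) \<in> D" using \<open>\<bar>a\<bar> \<in> D\<close> \<open>a \<noteq> 0\<close> by simp
    then have "0 < n \<and> int n \<in> D" unfolding n_def by (rule LeastI)
    then show "0 < int n" "int n \<in> D" by auto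
    show "int n \<le> q" if "0 < q" "q \<in> D" for q
      using Least_le[of "\<lambda>n. 0 < n \<and> int n \<in> D" "nat q"] that unfolding n_def by simp
  qed
  have nat_mult: "int n * p \<in> D" for n
  proof (induction n)
    case (Suc n)
    have "int (Suc n) * p = int n * p - (0 - p)" by (simp add: algebra_simps)
    then show ?case using diff Suc \<open>0 \<in> D\<close> p(2) by metis
  qed (simp add: \<open>0 \<in> D\<close>)
  have mult: "q * p \<in> D" for q
  proof (cases "q \<ge> 0")
    case True
    then show ?thesis using nat_mult[of "nat q"] by simp
  next
    case False
    then have "q * p = 0 - int (nat (- q)) * p" by simp
    then show ?thesis using diff nat_mult \<open>0 \<in> D\<close> by metis
  qed
  have "p dvd m" if "m \<in> D" for m
  proof -
    have "m mod p = m - (m div p) * p" by (simp add: minus_div_mult_eq_mod)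
    then have "m mod p \<in> D" using diff mult that by metis
    moreover have "0 \<le> m mod p" "m mod p < p" using p(1) by simp_all
    ultimately have "m mod p = 0" using p_least by force
    then show ?thesis by (simp add: dvd_eq_mod_eq_0)
  qed
  then show ?thesis using p by blast
qed

lemma int_span_Suc_last_coordinate_generator:
  assumes "add_subgroup H" "H \<subseteq> int_span e (Suc k)" "\<not> H \<subseteq> int_span e k"
  obtains h p where "h \<in> H" "p \<noteq> 0" "h - of_int p * e k \<in> int_span e k"
    "\<And>x. x \<in> H \<Longrightarrow> \<exists>q. x - of_int q * h \<in> int_span e k"
proof -
  define D where "D = {m. \<exists>y\<in>int_span e k. y + of_int m * e k \<in> H}"
  have decomp: "\<exists>y\<in>int_span e k. \<exists>m\<in>D. x = y + of_int m * e k" if "x \<in> H" for x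
    using that assms(2) unfolding int_span_Suc D_def by blast
  have diff_closed: "a - b \<in> D" if "a \<in> D" "b \<in> D" for a b
  proof -
    obtain y y' where y: "y \<in> int_span e k" "y' \<in> int_span e k"
      "y + of_int a * e k \<in> H" "y' + of_int b * e k \<in> H"
      using \<open>a \<in> D\<close> \<open>b \<in> D\<close> unfolding D_def by blast
    have "(y - y') + of_int (a - b) * e k = (y + of_int a * e k) - (y' + of_int b * e k)"
      by (simp add: algebra_simps)
    then have "(y - y') + of_int (a - b) * e k \<in> H"
      using add_subgroup_diff[OF assms(1) y(3,4)] by (simp only:)
    moreover have "y - y' \<in> int_span e k"
      using add_subgroup_diff[OF add_subgroup_int_span y(1,2)] .
    ultimately show ?thesis unfolding D_def by blast
  qed
  obtain a where "a \<in> D" "a \<noteq> 0" using assms(3) decomp by fastforce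
  then obtain p where p: "0 < p" "p \<in> D" "\<And>m. m \<in> D \<Longrightarrow> p dvd m"
    using int_diff_closed_generator[OF diff_closed] by blast
  then obtain y0 where y0: "y0 \<in> int_span e k" "y0 + of_int p * e k \<in> H"
    unfolding D_def by blast
  show ?thesis
  proof
    show "y0 + of_int p * e k \<in> H" "p \<noteq> 0" "y0 + of_int p * e k - of_int p * e k \<in> int_span e k"
      using y0 p(1) by simp_all
    fix x assume "x \<in> H"
    then obtain y m where y: "y \<in> int_span e k" "m \<in> D" "x = y + of_int m * e k"
      using decomp by blast
    then obtain q where "m = q * p" using p(3) by (metis dvd_def mult.commute)
    then have "x - of_int q * (y0 + of_int p * e k) = y - of_int q * y0"
      unfolding y(3) by (simp add: algebra_simps)
    moreover have "y - of_int q * y0 \<in> int_span e k"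
      using y(1) y0(1) add_subgroup_int_span add_subgroup_diff add_subgroup_int_mult by blast
    ultimately have "x - of_int q * (y0 + of_int p * e k) \<in> int_span e k" by simp
    then show "\<exists>q. x - of_int q * (y0 + of_int p * e k) \<in> int_span e k" by blast
  qed
qed

lemma add_subgroup_eq_int_span_Suc:
  assumes "add_subgroup H" "h \<in> H" "int_span f j \<subseteq> H"
    and "\<And>x. x \<in> H \<Longrightarrow> \<exists>q. x - of_int q * h \<in> int_span f j"
  shows "H = int_span (f(j := h)) (Suc j)"
proof -
  have span_f': "int_span (f(j := h)) j = int_span f j"
    by (rule int_span_cong) simp
  show ?thesis
  proof
    show "H \<subseteq> int_span (f(j := h)) (Suc j)"
    proof
      fix x assume "x \<in> H"
      then obtain q where "x - of_int q * h \<in> int_span f j" using assms(4) by blast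
      then show "x \<in> int_span (f(j := h)) (Suc j)"
        unfolding int_span_Suc span_f' by (intro CollectI exI[of _ "x - of_int q * h"] exI[of _ q]) auto
    qed
    show "int_span (f(j := h)) (Suc j) \<subseteq> H"
      unfolding int_span_Suc span_f'
      using assms(1-3) add_subgroup_add add_subgroup_int_mult by fastforce
  qed
qed

lemma add_subgroup_of_int_span_free:
  assumes "int_independent e k" "add_subgroup H" "H \<subseteq> int_span e k"
  shows "\<exists>f j. int_independent f j \<and> H = int_span f j"
  using assms
proof (induction k arbitrary: H)
  case 0
  then show ?case by (intro exI[of _ e] exI[of _ 0]) (auto simp: add_subgroup_def)
next
  case (Suc k)
  have indep_e: "int_independent e k"
    and last_coord: "\<And>y m. y \<in> int_span e k \<Longrightarrow> y + of_int m * e k = 0 \<Longrightarrow> m = 0"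
    using Suc.prems(1) unfolding int_independent_Suc by blast+
  define H0 where "H0 = H \<inter> int_span e k"
  obtain f j where f: "int_independent f j" "H0 = int_span f j"
    using Suc.IH[OF indep_e, of H0] Suc.prems(2) add_subgroup_Int add_subgroup_int_span
    unfolding H0_def by blast
  show ?case
  proof (cases "H \<subseteq> int_span e k")
    case True
    then show ?thesis using f unfolding H0_def by (metis inf.absorb1)
  next
    case False
    then obtain h p where h: "h \<in> H" "p \<noteq> 0" "h - of_int p * e k \<in> int_span e k"
      and reduce: "\<And>x. x \<in> H \<Longrightarrow> \<exists>q. x - of_int q * h \<in> int_span e k"
      using int_span_Suc_last_coordinate_generator[OF Suc.prems(2,3)] by blast
    have "H = int_span (f(j := h)) (Suc j)"
    proof (rule add_subgroup_eq_int_span_Suc[OF Suc.prems(2) h(1)])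
      show "int_span f j \<subseteq> H" using f(2) unfolding H0_def by blast
      show "\<exists>q. x - of_int q * h \<in> int_span f j" if "x \<in> H" for x
        using reduce[OF that] add_subgroup_diff[OF Suc.prems(2) that]
          add_subgroup_int_mult[OF Suc.prems(2) h(1)] f(2) unfolding H0_def by blast
    qed
    moreover have "int_independent (f(j := h)) (Suc j)"
      unfolding int_independent_Suc int_span_cong[of j "f(j := h)" f, simplified]
    proof (intro conjI ballI allI impI)
      show "int_independent (f(j := h)) j" using f(1) int_independent_cong[of j "f(j := h)" f] by simp
      fix y m assume "y \<in> int_span f j" "y + of_int m * (f(j := h)) j = 0"
      then have "(y + of_int m * (h - of_int p * e k)) + of_int (m * p) * e k = 0"
        by (simp add: algebra_simps)
      moreover have "y + of_int m * (h - of_int p * e k) \<in> int_span e k"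
        using \<open>y \<in> int_span f j\<close> add_subgroup_int_mult[OF add_subgroup_int_span h(3)] f(2)
        unfolding H0_def by (blast intro: add_subgroup_add[OF add_subgroup_int_span])
      ultimately have "m * p = 0" by (rule last_coord[rotated])
      then show "m = 0" using h(2) by simp
    qed
    ultimately show ?thesis by blast
  qed
qed

lemma finite_subset_int_span:
  assumes "finite L"
  shows "\<exists>e k. int_independent e k \<and> L \<subseteq> int_span e k"
  using assms
proof (induction L rule: finite_induct)
  case empty
  then show ?case by (intro exI[of _ "\<lambda>_. 0"] exI[of _ 0]) (auto simp: int_independent_def)
next
  case (insert g L)
  then obtain e k where e: "int_independent e k" "L \<subseteq> int_span e k" by blast
  have span_e': "int_span (e(k := g)) k = int_span e k"
    and indep_e': "int_independent (e(k := g)) k"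
    using e int_span_cong[of k "e(k := g)" e] int_independent_cong[of k "e(k := g)" e] by auto
  show ?case
  proof (cases "int_independent (e(k := g)) (Suc k)")
    case True
    have "int_span e k \<subseteq> int_span (e(k := g)) (Suc k)"
      unfolding int_span_Suc span_e' by (force intro: exI[of _ 0])
    moreover have "g \<in> int_span (e(k := g)) (Suc k)"
      unfolding int_span_Suc span_e'
      by (intro CollectI exI[of _ 0] exI[of _ 1]) (simp add: add_subgroup_zero[OF add_subgroup_int_span])
    ultimately show ?thesis using True e(2) by blast
  next
    case False
    txt \<open>Then \<open>m g \<in> int_span e k\<close> for some \<open>m \<noteq> 0\<close>, and dividing the basis by \<open>m\<close> makes room for \<open>g\<close>.\<close>
    then obtain y m where y: "y \<in> int_span e k" "y + of_int m * g = 0" "m \<noteq> 0"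
      unfolding int_independent_Suc span_e' using indep_e' by auto
    define c :: complex where "c = 1 / of_int m"
    have "c \<noteq> 0" using y(3) unfolding c_def by simp
    then have "int_independent (\<lambda>i. c * e i) k" using e(1) int_independent_mult by blast
    moreover have "x \<in> int_span (\<lambda>i. c * e i) k" if "x \<in> int_span e k" for x
    proof -
      have "of_int m * x \<in> int_span e k" using that add_subgroup_int_span add_subgroup_int_mult by blast
      moreover have "x = c * (of_int m * x)" using y(3) unfolding c_def by simp
      ultimately show ?thesis unfolding int_span_mult by blast
    qed
    moreover have "g \<in> int_span (\<lambda>i. c * e i) k"
    proof -
      have "- y \<in> int_span e k" using add_subgroup_uminus[OF add_subgroup_int_span y(1)] .
      moreover have "g = c * (- y)" using y(2,3) unfolding c_def by (simp add: eq_neg_iff_add_eq_0 field_simps)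
      ultimately show ?thesis unfolding int_span_mult by blast
    qed
    ultimately show ?thesis using e(2) by blast
  qed
qed

lemma finite_subset_free_subgroup:
  assumes "add_subgroup G" "finite L" "L \<subseteq> G" "g \<in> L" "g \<noteq> 0"
  shows "\<exists>H. L \<subseteq> H \<and> H \<subseteq> G \<and> (\<exists>k\<ge>1. iso_Zk H k)"
proof -
  obtain e k where e: "int_independent e k" "L \<subseteq> int_span e k"
    using finite_subset_int_span[OF assms(2)] by blast
  obtain f j where f: "int_independent f j" "G \<inter> int_span e k = int_span f j"
    using add_subgroup_of_int_span_free[OF e(1)] add_subgroup_Int[OF assms(1) add_subgroup_int_span]
    by blast
  have "g \<in> int_span f j" using f(2) e(2) assms(3,4) by blast
  then have "j \<noteq> 0" using assms(5) by (cases j) auto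
  then show ?thesis using e(2) f assms(3) unfolding iso_Zk_iff
    by (intro exI[of _ "G \<inter> int_span e k"] conjI exI[of _ j] exI[of _ f]) auto
qed

definition for_large_subsets :: "'a set \<Rightarrow> ('a set \<Rightarrow> bool) \<Rightarrow> bool" where
  "for_large_subsets G P \<longleftrightarrow> (\<exists>L. finite L \<and> L \<subseteq> G \<and> (\<forall>H. L \<subseteq> H \<longrightarrow> H \<subseteq> G \<longrightarrow> P H))"

lemma for_large_subsetsE:
  assumes "for_large_subsets G P"
  obtains L where "finite L" "L \<subseteq> G" "\<And>H. L \<subseteq> H \<Longrightarrow> H \<subseteq> G \<Longrightarrow> P H"
  using assms unfolding for_large_subsets_def by blast

lemma for_large_subsets_mono:
  assumes "for_large_subsets G P" "\<And>H. P H \<Longrightarrow> Q H"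
  shows "for_large_subsets G Q"
proof -
  obtain L where "finite L" "L \<subseteq> G" "\<forall>H. L \<subseteq> H \<longrightarrow> H \<subseteq> G \<longrightarrow> P H"
    using assms(1) unfolding for_large_subsets_def by blast
  then show ?thesis unfolding for_large_subsets_def by (intro exI[of _ L]) (simp add: assms(2))
qed

lemma for_large_subsets_conj:
  assumes "for_large_subsets G P" "for_large_subsets G Q"
  shows "for_large_subsets G (\<lambda>H. P H \<and> Q H)"
proof -
  obtain L L' where "finite L" "L \<subseteq> G" "\<forall>H. L \<subseteq> H \<longrightarrow> H \<subseteq> G \<longrightarrow> P H"
    "finite L'" "L' \<subseteq> G" "\<forall>H. L' \<subseteq> H \<longrightarrow> H \<subseteq> G \<longrightarrow> Q H"
    using assms unfolding for_large_subsets_def by blast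
  then show ?thesis unfolding for_large_subsets_def by (intro exI[of _ "L \<union> L'"]) auto
qed

lemma for_large_subsets_Ball:
  assumes "finite I" "\<And>i. i \<in> I \<Longrightarrow> for_large_subsets G (P i)"
  shows "for_large_subsets G (\<lambda>H. \<forall>i\<in>I. P i H)"
proof -
  obtain L where L: "\<And>i. i \<in> I \<Longrightarrow> finite (L i) \<and> L i \<subseteq> G \<and> (\<forall>H. L i \<subseteq> H \<longrightarrow> H \<subseteq> G \<longrightarrow> P i H)"
    using assms(2) unfolding for_large_subsets_def by metis
  show ?thesis unfolding for_large_subsets_def
  proof (intro exI[of _ "\<Union>(L ` I)"] conjI allI impI ballI)
    show "finite (\<Union>(L ` I))" "\<Union>(L ` I) \<subseteq> G" using assms(1) L by auto
    show "P i H" if "\<Union>(L ` I) \<subseteq> H" "H \<subseteq> G" "i \<in> I" for i H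
      using L[OF \<open>i \<in> I\<close>] that by blast
  qed
qed

lemma for_large_subsets_subset:
  "finite D \<Longrightarrow> D \<subseteq> G \<Longrightarrow> for_large_subsets G (\<lambda>H. D \<subseteq> H)"
  unfolding for_large_subsets_def by blast

lemma for_large_subsets_free_subgroup:
  assumes "add_subgroup G" "g \<in> G" "g \<noteq> 0" "for_large_subsets G P"
  shows "\<exists>H\<subseteq>G. (\<exists>k\<ge>1. iso_Zk H k) \<and> P H"
proof -
  obtain L where L: "finite L" "L \<subseteq> G" "\<And>H. L \<subseteq> H \<Longrightarrow> H \<subseteq> G \<Longrightarrow> P H"
    using assms(4) by (elim for_large_subsetsE) (rule that)
  have gL: "finite (insert g L)" "insert g L \<subseteq> G" using L(1,2) assms(2) by auto
  obtain H where H: "insert g L \<subseteq> H" "H \<subseteq> G" "\<exists>k\<ge>1. iso_Zk H k"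
    using finite_subset_free_subgroup[OF assms(1) gL insertI1 assms(3)] by blast
  have "P H" using L(3) H(1,2) by blast
  then show ?thesis using H(2,3) by blast
qed

section \<open>Finite spanning subfamilies\<close>

lemma (in module) span_image_finite_subset:
  assumes "x \<in> span (f ` X)"
  shows "\<exists>X'\<subseteq>X. finite X' \<and> x \<in> span (f ` X')"
proof -
  obtain t r where t: "finite t" "t \<subseteq> f ` X" and x: "x = (\<Sum>a\<in>t. r a *s a)"
    using assms unfolding span_explicit by blast
  obtain X' where "X' \<subseteq> X" "finite X'" "t = f ` X'"
    using finite_subset_image[OF t] by blast
  moreover have "x \<in> span t" unfolding x by (intro span_sum span_scale span_base)
  ultimately show ?thesis by blast
qed

lemma (in vector_space) finite_spanning_subfamily:
  assumes "finite T" "f ` A \<subseteq> span T"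
  shows "\<exists>A'\<subseteq>A. finite A' \<and> f ` A \<subseteq> span (f ` A')"
proof -
  obtain BB where BB: "BB \<subseteq> f ` A" "independent BB" "f ` A \<subseteq> span BB"
    using maximal_independent_subset by blast
  have "finite BB" using independent_span_bound[OF assms(1) BB(2)] BB(1) assms(2) by blast
  then obtain A' where "A' \<subseteq> A" "finite A'" "BB = f ` A'"
    using finite_subset_image[OF _ BB(1)] by blast
  then show ?thesis using BB(3) by blast
qed

lemma (in vector_space) finite_subfamily_spans_pointwise:
  assumes "finite B"
    and linear: "\<And>a. a \<in> A \<Longrightarrow> Vector_Spaces.linear scale scale (\<phi> a)"
    and maps_B: "\<And>a u. a \<in> A \<Longrightarrow> u \<in> B \<Longrightarrow> \<phi> a u \<in> span B"
  shows "\<exists>A'\<subseteq>A. finite A' \<and> (\<forall>a\<in>A. \<forall>w\<in>span B. \<phi> a w \<in> span ((\<lambda>a'. \<phi> a' w) ` A'))"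
proof -
  txt \<open>The restrictions \<open>\<rho> a\<close> of the maps to \<open>B\<close> live in a finite-dimensional space of functions,
    and evaluation at a fixed \<open>w \<in> span B\<close> is linear in the restriction.\<close>
  define sF where "sF c f = (\<lambda>u. scale c (f u))" for c and f :: "'b \<Rightarrow> 'b"
  interpret F: vector_space sF
    by unfold_locales (auto simp: sF_def scale_right_distrib scale_left_distrib)
  have sum_apply: "(\<Sum>x\<in>X. g x) u = (\<Sum>x\<in>X. g x u)" for X and g :: "_ \<Rightarrow> 'b \<Rightarrow> 'b" and u
    by (induction X rule: infinite_finite_induct) auto
  define \<rho> where "\<rho> a = (\<lambda>u. if u \<in> B then \<phi> a u else 0)" for a
  define \<delta> where "\<delta> u z = (\<lambda>u'. if u' = u then z else 0)" for u z :: 'b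
  define FF where "FF = (\<lambda>(u, z). \<delta> u z) ` (B \<times> B)"
  have "\<rho> a \<in> F.span FF" if "a \<in> A" for a
  proof -
    have "\<rho> a = (\<Sum>u\<in>B. \<delta> u (\<phi> a u))"
      unfolding \<rho>_def \<delta>_def sum_apply by (auto simp: \<open>finite B\<close> if_distrib cong: if_cong)
    moreover have "\<delta> u (\<phi> a u) \<in> F.span FF" if "u \<in> B" for u
    proof -
      interpret \<delta>: Vector_Spaces.linear scale sF "\<delta> u"
        by unfold_locales (auto simp: \<delta>_def sF_def)
      have "\<delta> u (\<phi> a u) \<in> F.span (\<delta> u ` B)"
        using maps_B[OF \<open>a \<in> A\<close> that] \<delta>.span_image by blast
      also have "F.span (\<delta> u ` B) \<subseteq> F.span FF"
        using that unfolding FF_def by (intro F.span_mono) auto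
      finally show ?thesis .
    qed
    ultimately show ?thesis by (simp add: F.span_sum)
  qed
  then have "\<rho> ` A \<subseteq> F.span FF" by blast
  moreover have "finite FF" unfolding FF_def using \<open>finite B\<close> by simp
  ultimately obtain A' where A': "A' \<subseteq> A" "finite A'" "\<rho> ` A \<subseteq> F.span (\<rho> ` A')"
    using F.finite_spanning_subfamily[of FF \<rho> A] by blast
  have "\<phi> a w \<in> span ((\<lambda>a'. \<phi> a' w) ` A')" if "a \<in> A" "w \<in> span B" for a w
  proof -
    obtain r where w: "w = (\<Sum>u\<in>B. r u *s u)"
      using \<open>w \<in> span B\<close> unfolding span_finite[OF \<open>finite B\<close>] by blast
    define E where "E f = (\<Sum>u\<in>B. r u *s f u)" for f :: "'b \<Rightarrow> 'b"
    interpret E: Vector_Spaces.linear sF scale E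
      by unfold_locales
        (auto simp: E_def sF_def scale_right_distrib sum.distrib scale_sum_right mult.commute)
    have E_\<rho>: "E (\<rho> b) = \<phi> b w" if "b \<in> A" for b
    proof -
      interpret \<phi>: Vector_Spaces.linear scale scale "\<phi> b" using linear[OF that] .
      show ?thesis unfolding E_def \<rho>_def w by (simp add: \<phi>.sum \<phi>.scale)
    qed
    have "\<rho> a \<in> F.span (\<rho> ` A')" using A'(3) \<open>a \<in> A\<close> by blast
    then have "E (\<rho> a) \<in> span (E ` \<rho> ` A')" using E.span_image by blast
    also have "E ` \<rho> ` A' = (\<lambda>a'. \<phi> a' w) ` A'" using A'(1) E_\<rho> unfolding image_image by (intro image_cong) auto
    finally show ?thesis using E_\<rho>[OF \<open>a \<in> A\<close>] by simp
  qed
  then show ?thesis using A'(1,2) by blast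
qed

section \<open>Weight spaces\<close>

lemma word_op_Nil [simp]: "word_op d [] v = v"
  and word_op_Cons [simp]: "word_op d (x # xs) v = d x (word_op d xs v)"
  and word_op_append: "word_op d (xs @ ys) v = word_op d xs (word_op d ys v)"
  by (simp_all add: word_op_def)

locale weight_operators = vector_space scale for scale :: "complex \<Rightarrow> 'v::ab_group_add \<Rightarrow> 'v" +
  fixes G :: "complex set" and d :: "complex \<Rightarrow> 'v \<Rightarrow> 'v"
  assumes add_subgroup_G: "add_subgroup G"
    and linear_d: "x \<in> G \<Longrightarrow> Vector_Spaces.linear scale scale (d x)"
    and d0_commutator: "y \<in> G \<Longrightarrow> d 0 (d y v) - d y (d 0 v) = scale y (d y v)"
begin

abbreviation V :: "complex \<Rightarrow> 'v set" where "V \<equiv> weight_space scale d"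

lemma linear_word_op: "set xs \<subseteq> G \<Longrightarrow> Vector_Spaces.linear scale scale (word_op d xs)"
proof (induction xs)
  case Nil
  then show ?case using linear_id unfolding id_def by simp
next
  case (Cons x xs)
  have "word_op d (x # xs) = d x \<circ> word_op d xs" by auto
  moreover have "Vector_Spaces.linear scale scale (d x \<circ> word_op d xs)"
    using Cons linear_d by (auto intro: Vector_Spaces.linear_compose)
  ultimately show ?case by (simp only:)
qed

lemma subspace_weight_space: "subspace (V \<nu>)"
proof -
  interpret d0: Vector_Spaces.linear scale scale "d 0"
    using linear_d add_subgroup_zero[OF add_subgroup_G] .
  show ?thesis unfolding weight_space_def
    by (intro subspaceI) (auto simp: d0.add d0.scale scale_right_distrib scale_left_commute)
qed

lemma d_weight_space: "y \<in> G \<Longrightarrow> v \<in> V \<nu> \<Longrightarrow> d y v \<in> V (\<nu> + y)"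
proof -
  assume "y \<in> G" "v \<in> V \<nu>"
  interpret dy: Vector_Spaces.linear scale scale "d y" using linear_d[OF \<open>y \<in> G\<close>] .
  have "d 0 (d y v) = d y (d 0 v) + scale y (d y v)"
    using d0_commutator[OF \<open>y \<in> G\<close>, of v] by (simp add: algebra_simps)
  also have "\<dots> = scale (\<nu> + y) (d y v)"
    using \<open>v \<in> V \<nu>\<close> by (simp add: weight_space_def dy.scale scale_left_distrib)
  finally show ?thesis by (simp add: weight_space_def)
qed

lemma word_op_weight_space: "set xs \<subseteq> G \<Longrightarrow> v \<in> V \<nu> \<Longrightarrow> word_op d xs v \<in> V (\<nu> + sum_list xs)"
proof (induction xs)
  case (Cons x xs)
  then have "d x (word_op d xs v) \<in> V (\<nu> + sum_list xs + x)" by (simp add: d_weight_space)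
  then show ?case by (simp add: ac_simps)
qed simp

lemma weight_vector_in_span_other_weights:
  assumes "finite \<Lambda>" "\<mu> \<notin> \<Lambda>" "b \<in> span (\<Union>\<nu>\<in>\<Lambda>. V \<nu>)" "b \<in> V \<mu>"
  shows "b = 0"
  using assms
proof (induction \<Lambda> arbitrary: b rule: finite_induct)
  case empty
  then show ?case by simp
next
  case (insert \<nu> \<Lambda>)
  txt \<open>\<open>d 0 - \<nu>\<close> kills \<open>V \<nu>\<close> and acts on every other weight space by a nonzero scalar.\<close>
  interpret d0: Vector_Spaces.linear scale scale "d 0"
    using linear_d add_subgroup_zero[OF add_subgroup_G] .
  define f where "f u = d 0 u - scale \<nu> u" for u
  interpret f: Vector_Spaces.linear scale scale f
    unfolding f_def Vector_Spaces.linear_iff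
    by (auto simp: vector_space_axioms d0.add d0.scale scale_right_diff_distrib scale_right_distrib scale_left_commute)
  have f_weight: "f u = scale (\<nu>' - \<nu>) u" if "u \<in> V \<nu>'" for u \<nu>'
    using that unfolding f_def weight_space_def by (simp add: scale_left_diff_distrib)
  obtain x y where xy: "b = x + y" "x \<in> V \<nu>" "y \<in> span (\<Union>\<nu>\<in>\<Lambda>. V \<nu>)"
    using insert.prems(2) span_eq_iff[of "V \<nu>"] subspace_weight_space unfolding UN_insert span_Un by blast
  have "f ` (\<Union>\<nu>\<in>\<Lambda>. V \<nu>) \<subseteq> (\<Union>\<nu>\<in>\<Lambda>. V \<nu>)"
    using f_weight subspace_weight_space by (auto simp: subspace_scale)
  then have "span (f ` (\<Union>\<nu>\<in>\<Lambda>. V \<nu>)) \<subseteq> span (\<Union>\<nu>\<in>\<Lambda>. V \<nu>)"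
    by (rule span_mono)
  then have "f y \<in> span (\<Union>\<nu>\<in>\<Lambda>. V \<nu>)"
    using imageI[OF xy(3), of f] unfolding f.span_image by blast
  moreover have "f y = scale (\<mu> - \<nu>) b"
    using xy f_weight[OF \<open>b \<in> V \<mu>\<close>] f_weight[OF xy(2)] f.add by simp
  moreover have "scale (\<mu> - \<nu>) b \<in> V \<mu>"
    using insert.prems(3) subspace_weight_space by (simp add: subspace_scale)
  moreover have "\<mu> \<notin> \<Lambda>" using insert.prems(1) by simp
  ultimately have "scale (\<mu> - \<nu>) b = 0" using insert.IH by metis
  then show "b = 0" using insert.prems(1) by simp
qed

lemma weight_component_in_span:
  assumes weights: "\<And>x. x \<in> X \<Longrightarrow> f x \<in> V (w x)" and "b \<in> span (f ` X)" "b \<in> V \<mu>"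
  shows "b \<in> span (f ` {x\<in>X. w x = \<mu>})"
proof -
  obtain X' where X': "X' \<subseteq> X" "finite X'" "b \<in> span (f ` X')"
    using span_image_finite_subset[OF \<open>b \<in> span (f ` X)\<close>] by blast
  define X0 where "X0 = {x\<in>X'. w x = \<mu>}"
  define X1 where "X1 = {x\<in>X'. w x \<noteq> \<mu>}"
  have "f ` X' = f ` X0 \<union> f ` X1" unfolding X0_def X1_def by auto
  then have "b \<in> span (f ` X0 \<union> f ` X1)" using X'(3) by simp
  then obtain x y where xy: "b = x + y" "x \<in> span (f ` X0)" "y \<in> span (f ` X1)"
    unfolding span_Un by blast
  have "span (f ` X0) \<subseteq> V \<mu>"
    using weights X'(1) subspace_weight_space unfolding X0_def by (intro span_minimal) auto
  then have "y \<in> V \<mu>"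
    using xy \<open>b \<in> V \<mu>\<close> subspace_weight_space by (metis add_diff_cancel_left' subset_iff subspace_diff)
  moreover have "f ` X1 \<subseteq> (\<Union>\<nu>\<in>w ` X1. V \<nu>)" using weights X'(1) unfolding X1_def by auto
  then have "y \<in> span (\<Union>\<nu>\<in>w ` X1. V \<nu>)" using xy(3) span_mono by blast
  moreover have "finite (w ` X1)" "\<mu> \<notin> w ` X1" using X'(2) unfolding X1_def by auto
  ultimately have "y = 0" using weight_vector_in_span_other_weights by blast
  moreover have "span (f ` X0) \<subseteq> span (f ` {x\<in>X. w x = \<mu>})"
    using X'(1) unfolding X0_def by (intro span_mono) auto
  ultimately show ?thesis using xy by auto
qed

lemma finite_zero_weight_words:
  assumes "finite B" "span B = V \<mu>"
  defines "A \<equiv> {xs. set xs \<subseteq> G \<and> sum_list xs = 0}"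
  shows "\<exists>WF\<subseteq>A. finite WF \<and>
    (\<forall>xs\<in>A. \<forall>w\<in>V \<mu>. word_op d xs w \<in> span ((\<lambda>ys. word_op d ys w) ` WF))"
  unfolding assms(2)[symmetric]
proof (rule finite_subfamily_spans_pointwise[OF \<open>finite B\<close>])
  show "Vector_Spaces.linear scale scale (word_op d xs)" if "xs \<in> A" for xs
    using that linear_word_op unfolding A_def by blast
  show "word_op d xs u \<in> span B" if "xs \<in> A" "u \<in> B" for xs u
    using word_op_weight_space[of xs u \<mu>] that assms(2) span_superset unfolding A_def by auto
qed

lemma word_op_U_apply:
  assumes "set xs \<subseteq> H" "H \<subseteq> G" "w \<in> U_apply scale d H \<mu>"
  shows "word_op d xs w \<in> U_apply scale d H \<mu>"
proof -
  define S where "S = {word_op d ys v | ys v. set ys \<subseteq> H \<and> v \<in> V \<mu>}"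
  interpret l: Vector_Spaces.linear scale scale "word_op d xs"
    using linear_word_op assms(1,2) by blast
  have "word_op d xs ` S \<subseteq> S"
    using assms(1) unfolding S_def by (force simp flip: word_op_append)
  then show ?thesis
    using assms(3) l.span_image span_mono unfolding U_apply_def S_def[symmetric] by blast
qed

lemma U_apply_subset:
  assumes "H \<subseteq> G" "V \<mu>' \<subseteq> U_apply scale d H \<mu>"
  shows "U_apply scale d H \<mu>' \<subseteq> U_apply scale d H \<mu>"
  unfolding U_apply_def[of _ _ _ \<mu>']
  using assms word_op_U_apply by (intro span_minimal) (auto simp: U_apply_def)

lemma word_op_in_U_apply: "set xs \<subseteq> H \<Longrightarrow> v \<in> V \<mu> \<Longrightarrow> word_op d xs v \<in> U_apply scale d H \<mu>"
  unfolding U_apply_def by (intro span_base) blast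

end

section \<open>Irreducible weight modules\<close>

locale irreducible_weight_operators = weight_operators +
  assumes irreducible: "vir_irreducible G scale d"
begin

lemma span_words_eq_UNIV:
  assumes "v \<noteq> 0"
  shows "span ((\<lambda>xs. word_op d xs v) ` {xs. set xs \<subseteq> G}) = UNIV"
proof -
  define S where "S = (\<lambda>xs. word_op d xs v) ` {xs. set xs \<subseteq> G}"
  have "d x w \<in> span S" if "x \<in> G" "w \<in> span S" for x w
  proof -
    interpret dx: Vector_Spaces.linear scale scale "d x" using linear_d[OF \<open>x \<in> G\<close>] .
    have "d x ` S \<subseteq> S"
      using \<open>x \<in> G\<close> unfolding S_def by (force simp flip: word_op_Cons)
    then have "span (d x ` S) \<subseteq> span S" by (rule span_mono)
    then show ?thesis using imageI[OF \<open>w \<in> span S\<close>, of "d x"] unfolding dx.span_image by blast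
  qed
  moreover have "v \<in> span S" unfolding S_def by (intro span_base image_eqI[of _ _ "[]"]) auto
  ultimately show ?thesis
    using irreducible \<open>v \<noteq> 0\<close> subspace_span unfolding vir_irreducible_def S_def by blast
qed

lemma nonzero_weight_vector:
  assumes "V \<mu> \<noteq> {0}"
  obtains v where "v \<in> V \<mu>" "v \<noteq> 0"
  using assms subspace_0[OF subspace_weight_space] by blast

lemma weight_space_in_span_zero_weight_words:
  assumes "w \<in> V \<mu>" "w \<noteq> 0"
  shows "V \<mu> \<subseteq> span ((\<lambda>xs. word_op d xs w) ` {xs. set xs \<subseteq> G \<and> sum_list xs = 0})"
proof
  fix v assume "v \<in> V \<mu>"
  have "v \<in> span ((\<lambda>xs. word_op d xs w) ` {xs \<in> {xs. set xs \<subseteq> G}. \<mu> + sum_list xs = \<mu>})"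
  proof (rule weight_component_in_span[OF _ _ \<open>v \<in> V \<mu>\<close>])
    show "v \<in> span ((\<lambda>xs. word_op d xs w) ` {xs. set xs \<subseteq> G})"
      using span_words_eq_UNIV[OF \<open>w \<noteq> 0\<close>] by simp
  qed (simp add: word_op_weight_space \<open>w \<in> V \<mu>\<close>)
  then show "v \<in> span ((\<lambda>xs. word_op d xs w) ` {xs. set xs \<subseteq> G \<and> sum_list xs = 0})"
    by simp
qed

lemma weight_difference_in_G:
  assumes "V \<mu> \<noteq> {0}" "V \<mu>' \<noteq> {0}"
  shows "\<mu>' - \<mu> \<in> G"
proof -
  obtain v where v: "v \<in> V \<mu>" "v \<noteq> 0" using nonzero_weight_vector[OF assms(1)] .
  obtain b where b: "b \<in> V \<mu>'" "b \<noteq> 0" using nonzero_weight_vector[OF assms(2)] .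
  have "b \<in> span ((\<lambda>xs. word_op d xs v) ` {xs \<in> {xs. set xs \<subseteq> G}. \<mu> + sum_list xs = \<mu>'})"
  proof (rule weight_component_in_span[OF _ _ b(1)])
    show "b \<in> span ((\<lambda>xs. word_op d xs v) ` {xs. set xs \<subseteq> G})"
      using span_words_eq_UNIV[OF v(2)] by simp
  qed (simp add: word_op_weight_space v(1))
  then have "{xs \<in> {xs. set xs \<subseteq> G}. \<mu> + sum_list xs = \<mu>'} \<noteq> {}"
    using b(2) by (metis image_empty span_empty singletonD)
  then obtain xs where "set xs \<subseteq> G" "\<mu> + sum_list xs = \<mu>'" by blast
  then show ?thesis using add_subgroup_sum_list[OF add_subgroup_G] by force
qed

lemma U0_irreducible_for_large_subsets:
  assumes "finite B" "span B = V \<mu>" "V \<mu> \<noteq> {0}"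
  shows "for_large_subsets G (\<lambda>H. U0_irreducible scale d H \<mu>)"
proof -
  obtain WF where WF: "WF \<subseteq> {xs. set xs \<subseteq> G \<and> sum_list xs = 0}" "finite WF"
    and spans: "\<forall>xs\<in>{xs. set xs \<subseteq> G \<and> sum_list xs = 0}. \<forall>w\<in>V \<mu>.
      word_op d xs w \<in> span ((\<lambda>ys. word_op d ys w) ` WF)"
    using finite_zero_weight_words[OF assms(1,2)] by blast
  have "U0_irreducible scale d H \<mu>" if H: "\<Union>(set ` WF) \<subseteq> H" for H
    unfolding U0_irreducible_def
  proof (intro conjI allI impI \<open>V \<mu> \<noteq> {0}\<close>)
    fix W assume W: "subspace W" "W \<subseteq> V \<mu>"
      and stable: "\<forall>xs. set xs \<subseteq> H \<longrightarrow> sum_list xs = 0 \<longrightarrow> (\<forall>w\<in>W. word_op d xs w \<in> W)"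
    show "W = {0} \<or> W = V \<mu>"
    proof (cases "W = {0}")
      case False
      then obtain w where w: "w \<in> W" "w \<noteq> 0" using subspace_0[OF W(1)] by blast
      have "(\<lambda>ys. word_op d ys w) ` WF \<subseteq> W" using stable WF(1) H w(1) by blast
      then have "span ((\<lambda>ys. word_op d ys w) ` WF) \<subseteq> W" using span_minimal W(1) by blast
      then have "(\<lambda>xs. word_op d xs w) ` {xs. set xs \<subseteq> G \<and> sum_list xs = 0} \<subseteq> W"
        using spans w(1) W(2) by blast
      then have "V \<mu> \<subseteq> W"
        using weight_space_in_span_zero_weight_words[of w \<mu>] w W span_minimal by blast
      then show ?thesis using W(2) by blast
    qed simp
  qed
  moreover have "finite (\<Union>(set ` WF))" "\<Union>(set ` WF) \<subseteq> G" using WF by auto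
  ultimately show ?thesis unfolding for_large_subsets_def by blast
qed

lemma U_apply_subset_for_large_subsets:
  assumes "V \<mu> \<noteq> {0}" "finite B" "span B = V \<mu>'"
  shows "for_large_subsets G (\<lambda>H. U_apply scale d H \<mu>' \<subseteq> U_apply scale d H \<mu>)"
proof -
  obtain v where v: "v \<in> V \<mu>" "v \<noteq> 0" using nonzero_weight_vector[OF assms(1)] .
  have "\<exists>X\<subseteq>{xs. set xs \<subseteq> G}. finite X \<and> b \<in> span ((\<lambda>xs. word_op d xs v) ` X)" for b
    by (rule span_image_finite_subset) (simp add: span_words_eq_UNIV[OF v(2)])
  then obtain X where X: "\<And>b. X b \<subseteq> {xs. set xs \<subseteq> G}" "\<And>b. finite (X b)"
    "\<And>b. b \<in> span ((\<lambda>xs. word_op d xs v) ` X b)"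
    by metis
  define L where "L = (\<Union>b\<in>B. \<Union>xs\<in>X b. set xs)"
  have "U_apply scale d H \<mu>' \<subseteq> U_apply scale d H \<mu>" if "L \<subseteq> H" "H \<subseteq> G" for H
  proof (rule U_apply_subset[OF \<open>H \<subseteq> G\<close>])
    have "(\<lambda>xs. word_op d xs v) ` X b \<subseteq> U_apply scale d H \<mu>" if "b \<in> B" for b
      using word_op_in_U_apply v(1) \<open>L \<subseteq> H\<close> that unfolding L_def by blast
    then have "B \<subseteq> U_apply scale d H \<mu>"
      using X(3) span_minimal[OF _ subspace_span] unfolding U_apply_def by blast
    then show "V \<mu>' \<subseteq> U_apply scale d H \<mu>"
      using span_minimal[OF _ subspace_span] assms(3) unfolding U_apply_def by blast
  qed
  moreover have "finite L" "L \<subseteq> G" unfolding L_def using assms(2) X(1,2) by auto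
  ultimately show ?thesis unfolding for_large_subsets_def by blast
qed

lemma U_apply_eq_U0_irreducible_for_large_subsets:
  assumes "finite I" "\<And>\<mu>. \<mu> \<in> I \<Longrightarrow> V \<mu> \<noteq> {0}" "\<And>\<mu>. \<exists>B. finite B \<and> span B = V \<mu>"
  shows "for_large_subsets G (\<lambda>H.
    (\<forall>\<mu>\<in>I. \<forall>\<mu>'\<in>I. U_apply scale d H \<mu> = U_apply scale d H \<mu>' \<and> \<mu> - \<mu>' \<in> H) \<and>
    (\<forall>\<mu>\<in>I. U0_irreducible scale d H \<mu>))"
proof -
  have "for_large_subsets G (\<lambda>H. U_apply scale d H \<mu>' \<subseteq> U_apply scale d H \<mu> \<and> {\<mu> - \<mu>'} \<subseteq> H)"
    if "\<mu> \<in> I" "\<mu>' \<in> I" for \<mu> \<mu>'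
  proof (rule for_large_subsets_conj)
    obtain B where "finite B" "span B = V \<mu>'" using assms(3) by blast
    then show "for_large_subsets G (\<lambda>H. U_apply scale d H \<mu>' \<subseteq> U_apply scale d H \<mu>)"
      using U_apply_subset_for_large_subsets assms(2)[OF that(1)] by blast
    show "for_large_subsets G (\<lambda>H. {\<mu> - \<mu>'} \<subseteq> H)"
      using weight_difference_in_G assms(2) that by (intro for_large_subsets_subset) auto
  qed
  then have "for_large_subsets G (\<lambda>H. \<forall>\<mu>\<in>I. \<forall>\<mu>'\<in>I.
      U_apply scale d H \<mu>' \<subseteq> U_apply scale d H \<mu> \<and> {\<mu> - \<mu>'} \<subseteq> H)"
    using assms(1) by (intro for_large_subsets_Ball)
  moreover have "for_large_subsets G (\<lambda>H. U0_irreducible scale d H \<mu>)" if "\<mu> \<in> I" for \<mu>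
    using assms(2)[OF that] assms(3)[of \<mu>] U0_irreducible_for_large_subsets by blast
  then have "for_large_subsets G (\<lambda>H. \<forall>\<mu>\<in>I. U0_irreducible scale d H \<mu>)"
    by (rule for_large_subsets_Ball[OF assms(1)])
  ultimately show ?thesis
    by (rule for_large_subsets_mono[OF for_large_subsets_conj]) (blast intro: subset_antisym)
qed

end

lemma irreducible_weight_operators_vir_module:
  assumes "add_subgroup G" "vir_module G scale d c" "vir_irreducible G scale d"
  shows "irreducible_weight_operators scale G d"
proof -
  interpret vector_space scale using assms(2) unfolding vir_module_def by blast
  have "d 0 (d y v) - d y (d 0 v) = scale y (d y v)" if "y \<in> G" for y v
    using assms(1,2) that unfolding vir_module_def add_subgroup_def by force
  then show ?thesis
    using assms unfolding vir_module_def irreducible_weight_operators_def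
      irreducible_weight_operators_axioms_def weight_operators_def weight_operators_axioms_def
    by blast
qed

theorem lemma3p1:
  fixes G :: "complex set" and scale :: "complex \<Rightarrow> 'v::ab_group_add \<Rightarrow> 'v"
    and d :: "complex \<Rightarrow> 'v \<Rightarrow> 'v" and c :: complex and I :: "complex set"
  assumes "add_subgroup G"
    and "rank_ge G 2"
    and "vir_module G scale d c"
    and "harish_chandra scale d"
    and "vir_irreducible G scale d"
    and "\<not> vir_trivial G scale d c"
    and "finite I" and "I \<subseteq> supp scale d"
  shows "\<exists>GI. GI \<subseteq> G \<and> (\<exists>k\<ge>1. iso_Zk GI k) \<and>
           (\<forall>\<mu>\<in>I. \<forall>\<mu>'\<in>I. U_apply scale d GI \<mu> = U_apply scale d GI \<mu>' \<and> \<mu> - \<mu>' \<in> GI) \<and>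
           (\<forall>\<mu>\<in>I. U0_irreducible scale d GI \<mu>)"
proof -
  interpret irreducible_weight_operators scale G d
    using irreducible_weight_operators_vir_module assms(1,3,5) .
  obtain gs :: "nat \<Rightarrow> complex" where gs: "\<forall>i<2. gs i \<in> G \<and> gs i \<noteq> 0"
    using assms(2) unfolding rank_ge_def by blast
  have nonzero: "V \<mu> \<noteq> {0}" if "\<mu> \<in> I" for \<mu> using assms(8) that unfolding supp_def by auto
  have fin_dim: "\<exists>B. finite B \<and> span B = V \<mu>" for \<mu>
    using assms(4) unfolding harish_chandra_def by blast
  show ?thesis
  proof (rule for_large_subsets_free_subgroup[OF assms(1)])
    show "gs 0 \<in> G" "gs 0 \<noteq> 0" using gs by simp_all
    show "for_large_subsets G (\<lambda>H.
      (\<forall>\<mu>\<in>I. \<forall>\<mu>'\<in>I. U_apply scale d H \<mu> = U_apply scale d H \<mu>' \<and> \<mu> - \<mu>' \<in> H) \<and>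
      (\<forall>\<mu>\<in>I. U0_irreducible scale d H \<mu>))"
      by (rule U_apply_eq_U0_irreducible_for_large_subsets[OF assms(7) _ fin_dim]) (rule nonzero)
  qed
qed

end
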